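(* Let $k \geq 2$ be an integer, let $G$ be a $(k+1)$-connected $(K_2 \cup kK_1)$-free graph, let $a,b \in V(G)$ be distinct, and let $P$ be a longest $ab$-path in $G$. Then every component of $G - V(P)$ consists of a single vertex.
   Context: All graphs are finite, undirected and simple. For graphs $R, R'$, $R \cup R'$ is their disjoint union and $kR$ is the disjoint union of $k$ copies of $R$; $K_n$ is the complete graph on $n$ vertices. A graph $G$ is $R$-free if it contains no induced subgraph isomorphic to $R$. *)

theory Defs
  imports Main
begin

definition simple_graph :: "'a set \<Rightarrow> ('a \<Rightarrow> 'a \<Rightarrow> bool) \<Rightarrow> bool" where
  "simple_graph V E \<longleftrightarrow> finite V \<and> (\<forall>x y. E x y \<longrightarrow> E y x) \<and> (\<forall>x. \<not> E x x)
     \<and> (\<forall>x y. E x y \<longrightarrow> x \<in> V \<and> y \<in> V)"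

definition is_path :: "('a \<Rightarrow> 'a \<Rightarrow> bool) \<Rightarrow> 'a list \<Rightarrow> bool" where
  "is_path E xs \<longleftrightarrow> xs \<noteq> [] \<and> distinct xs \<and> (\<forall>i. Suc i < length xs \<longrightarrow> E (xs ! i) (xs ! Suc i))"

definition path_in :: "'a set \<Rightarrow> ('a \<Rightarrow> 'a \<Rightarrow> bool) \<Rightarrow> 'a \<Rightarrow> 'a \<Rightarrow> 'a list \<Rightarrow> bool" where
  "path_in W E a b xs \<longleftrightarrow> is_path E xs \<and> set xs \<subseteq> W \<and> hd xs = a \<and> last xs = b"

definition connected_on :: "'a set \<Rightarrow> ('a \<Rightarrow> 'a \<Rightarrow> bool) \<Rightarrow> bool" where
  "connected_on W E \<longleftrightarrow> (\<forall>x\<in>W. \<forall>y\<in>W. \<exists>xs. path_in W E x y xs)"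

definition k_connected :: "nat \<Rightarrow> 'a set \<Rightarrow> ('a \<Rightarrow> 'a \<Rightarrow> bool) \<Rightarrow> bool" where
  "k_connected k V E \<longleftrightarrow> card V > k \<and>
     (\<forall>X. X \<subseteq> V \<and> card X < k \<longrightarrow> connected_on (V - X) E)"

definition component_of :: "'a set \<Rightarrow> ('a \<Rightarrow> 'a \<Rightarrow> bool) \<Rightarrow> 'a set \<Rightarrow> bool" where
  "component_of W E C \<longleftrightarrow> C \<noteq> {} \<and> C \<subseteq> W \<and> connected_on C E \<and>
     (\<forall>D. C \<subseteq> D \<and> D \<subseteq> W \<and> connected_on D E \<longrightarrow> D = C)"

definition has_induced_K2_kK1 :: "nat \<Rightarrow> 'a set \<Rightarrow> ('a \<Rightarrow> 'a \<Rightarrow> bool) \<Rightarrow> bool" where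
  "has_induced_K2_kK1 k V E \<longleftrightarrow> (\<exists>u v I. u \<in> V \<and> v \<in> V \<and> E u v \<and> I \<subseteq> V \<and> card I = k
     \<and> u \<notin> I \<and> v \<notin> I \<and> (\<forall>x\<in>I. \<forall>y\<in>I. \<not> E x y)
     \<and> (\<forall>x\<in>I. \<not> E u x \<and> \<not> E v x))"

end

theory Submission imports Defs begin

text \<open>Let \<open>C\<close> be a component of \<open>G - V(P)\<close> containing an edge \<open>uv\<close>, and let \<open>N\<close> be the set
  of vertices of \<open>P\<close> with a neighbour in \<open>C\<close>. As \<open>P\<close> is longest, no two consecutive vertices of
  \<open>P\<close> lie in \<open>N\<close> (otherwise \<open>P\<close> could make a detour through \<open>C\<close>); so \<open>N\<close> misses a vertex of
  \<open>P\<close>, separates it from \<open>C\<close>, and has at least \<open>k + 1\<close> elements. The successors on \<open>P\<close> of the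
  vertices \<open>x\<^sub>i \<in> N\<close> are then at least \<open>k\<close> vertices without neighbours in \<open>C\<close>, and pairwise
  nonadjacent: an edge \<open>x\<^sub>i\<^sub>+\<^sub>1 x\<^sub>j\<^sub>+\<^sub>1\<close> with \<open>i < j\<close> would give the longer path
  \<open>a \<dots> x\<^sub>i C x\<^sub>j \<dots> x\<^sub>i\<^sub>+\<^sub>1 x\<^sub>j\<^sub>+\<^sub>1 \<dots> b\<close>. Together with \<open>uv\<close> they induce \<open>K\<^sub>2 \<union> kK\<^sub>1\<close>.\<close>

lemma is_path_iff: "is_path E xs \<longleftrightarrow> xs \<noteq> [] \<and> distinct xs \<and> successively E xs"
  by (simp add: is_path_def successively_conv_nth)

lemma is_path_rev:
  assumes "\<forall>x y. E x y \<longrightarrow> E y x" "is_path E xs"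
  shows "is_path E (rev xs)"
proof -
  have "successively (\<lambda>x y. E y x) xs = successively E xs"
    by (rule successively_cong) (use assms(1) in auto)
  then show ?thesis using assms(2) by (simp add: is_path_iff)
qed

lemma path_in_rev:
  assumes "\<forall>x y. E x y \<longrightarrow> E y x" "path_in W E x y xs"
  shows "path_in W E y x (rev xs)"
  using assms(2) is_path_rev[OF assms(1)] by (simp add: path_in_def hd_rev last_rev)

lemma path_in_mono: "path_in W E x y xs \<Longrightarrow> W \<subseteq> W' \<Longrightarrow> path_in W' E x y xs"
  by (auto simp: path_in_def)

lemma path_in_snoc:
  assumes "path_in W E x z xs" "E z w" "w \<notin> set xs"
  shows "path_in (insert w W) E x w (xs @ [w])"
  using assms by (auto simp: path_in_def is_path_iff successively_append_iff)

lemma is_path_splice: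
  assumes "is_path E (xs @ ys)" "is_path E Q" "set Q \<inter> set (xs @ ys) = {}"
    "xs \<noteq> []" "ys \<noteq> []" "E (last xs) (hd Q)" "E (last Q) (hd ys)"
  shows "is_path E (xs @ Q @ ys)"
  using assms by (auto simp: is_path_iff successively_append_iff)

lemma is_path_splice_rev:
  assumes sym: "\<forall>x y. E x y \<longrightarrow> E y x"
    and "is_path E (xs @ ys @ zs)" "is_path E Q" "set Q \<inter> set (xs @ ys @ zs) = {}"
    "xs \<noteq> []" "ys \<noteq> []" "zs \<noteq> []"
    "E (last xs) (hd Q)" "E (last Q) (last ys)" "E (hd ys) (hd zs)"
  shows "is_path E (xs @ Q @ rev ys @ zs)"
proof -
  have "is_path E ys" using assms(2,6) by (auto simp: is_path_iff successively_append_iff)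
  then have "is_path E (rev ys)" by (rule is_path_rev[OF sym])
  then show ?thesis using assms(2-10) sym
    by (auto simp: is_path_iff successively_append_iff hd_rev last_rev)
qed

lemma connected_on_insert:
  assumes sym: "\<forall>x y. E x y \<longrightarrow> E y x"
    and conn: "connected_on C E" and "z \<in> C" "E z w" "w \<notin> C"
  shows "connected_on (insert w C) E"
proof -
  have to_w: "\<exists>xs. path_in (insert w C) E x w xs" if "x \<in> insert w C" for x
  proof (cases "x = w")
    case True
    then have "path_in (insert w C) E x w [w]" by (simp add: path_in_def is_path_def)
    then show ?thesis ..
  next
    case False
    then have "x \<in> C" using that by simp
    then obtain xs where xs: "path_in C E x z xs"
      using conn assms(3) unfolding connected_on_def by blast
    moreover have "w \<notin> set xs" using xs assms(5) by (auto simp: path_in_def)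
    ultimately have "path_in (insert w C) E x w (xs @ [w])" using assms(4) by (intro path_in_snoc)
    then show ?thesis ..
  qed
  show ?thesis unfolding connected_on_def
  proof (intro ballI)
    fix x y assume x: "x \<in> insert w C" and y: "y \<in> insert w C"
    consider "y = w" | "x = w" "y \<in> C" | "x \<in> C" "y \<in> C" using x y by blast
    then show "\<exists>xs. path_in (insert w C) E x y xs"
    proof cases
      case 1 then show ?thesis using to_w x by blast
    next
      case 2 then show ?thesis using to_w[of y] path_in_rev[OF sym] by blast
    next
      case 3 then show ?thesis
        using conn path_in_mono[of C] unfolding connected_on_def by blast
    qed
  qed
qed

lemma connected_on_edge:
  assumes "connected_on C E" "u \<in> C" "v \<in> C" "u \<noteq> v"
  obtains x y where "x \<in> C" "y \<in> C" "E x y"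
proof -
  obtain xs where xs: "path_in C E u v xs" using assms unfolding connected_on_def by blast
  then have "Suc 0 < length xs"
    using assms(4) by (cases xs) (auto simp: path_in_def is_path_def)
  moreover have "E (xs ! 0) (xs ! Suc 0)" "set xs \<subseteq> C"
    using xs calculation by (auto simp: path_in_def is_path_def)
  ultimately show ?thesis using that by (meson Suc_lessD nth_mem subsetD)
qed

lemma list_leaves_set:
  "xs \<noteq> [] \<Longrightarrow> hd xs \<in> C \<Longrightarrow> last xs \<notin> C \<Longrightarrow>
    \<exists>i. Suc i < length xs \<and> xs ! i \<in> C \<and> xs ! Suc i \<notin> C"
proof (induction xs)
  case (Cons x xs)
  show ?case
  proof (cases "xs \<noteq> [] \<and> hd xs \<in> C")
    case True
    with Cons obtain i where "Suc i < length xs" "xs ! i \<in> C" "xs ! Suc i \<notin> C" by auto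
    then show ?thesis by (intro exI[of _ "Suc i"]) auto
  next
    case False
    then show ?thesis using Cons.prems by (intro exI[of _ 0]) (cases xs, auto)
  qed
qed simp

definition attachments :: "'a set \<Rightarrow> ('a \<Rightarrow> 'a \<Rightarrow> bool) \<Rightarrow> 'a set \<Rightarrow> 'a set" where
  "attachments S E C = {x \<in> S. \<exists>h\<in>C. E x h}"

lemma k_connected_le_card_attachments:
  assumes sym: "\<forall>x y. E x y \<longrightarrow> E y x"
    and conn: "k_connected K V E" and "S \<subseteq> V" and comp: "component_of (V - S) E C"
    and "x \<in> S" "x \<notin> attachments S E C"
  shows "K \<le> card (attachments S E C)"
proof (rule ccontr)
  let ?N = "attachments S E C"
  assume "\<not> K \<le> card ?N"
  moreover have "?N \<subseteq> V" using \<open>S \<subseteq> V\<close> by (auto simp: attachments_def)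
  ultimately have "connected_on (V - ?N) E" using conn by (auto simp: k_connected_def)
  moreover obtain u where u: "u \<in> C" using comp by (auto simp: component_of_def)
  moreover have "u \<in> V - ?N" using u comp by (auto simp: component_of_def attachments_def)
  moreover have "x \<in> V - ?N" using assms(3,5,6) by blast
  ultimately obtain xs where xs: "path_in (V - ?N) E u x xs" by (auto simp: connected_on_def)
  moreover have "x \<notin> C" using comp assms(5) by (auto simp: component_of_def)
  ultimately obtain i where i: "Suc i < length xs" "xs ! i \<in> C" "xs ! Suc i \<notin> C"
    using list_leaves_set[of xs C] u by (auto simp: path_in_def is_path_def)
  define w where "w = xs ! Suc i"
  have "E (xs ! i) w" using xs i(1) by (simp add: w_def path_in_def is_path_def)
  have "w \<in> set xs" using i(1) by (simp add: w_def)
  then have "w \<in> V - ?N" using xs by (auto simp: path_in_def)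
  show False
  proof (cases "w \<in> S")
    case True
    then show False using \<open>E (xs ! i) w\<close> \<open>w \<in> V - ?N\<close> i(2) sym by (auto simp: attachments_def)
  next
    case False
    have "connected_on (insert w C) E"
      using connected_on_insert[OF sym _ i(2) \<open>E (xs ! i) w\<close>] comp i(3)
      by (auto simp: w_def component_of_def)
    moreover have "insert w C \<subseteq> V - S" using comp False \<open>w \<in> V - ?N\<close> by (auto simp: component_of_def)
    ultimately show False using comp i(3) by (auto simp: w_def component_of_def)
  qed
qed

definition successors :: "'a list \<Rightarrow> 'a set \<Rightarrow> 'a set" where
  "successors xs N = {xs ! Suc i | i. Suc i < length xs \<and> xs ! i \<in> N}"

lemma card_le_Suc_card_successors:
  assumes "distinct xs" "N \<subseteq> set xs"
  shows "card N \<le> Suc (card (successors xs N))"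
proof -
  define J where "J = {i. Suc i < length xs \<and> xs ! i \<in> N}"
  have "finite J" unfolding J_def by (rule finite_subset[of _ "{..<length xs}"]) auto
  have "successors xs N = (\<lambda>i. xs ! Suc i) ` J" by (auto simp: successors_def J_def)
  moreover have "inj_on (\<lambda>i. xs ! Suc i) J"
    using assms(1) by (auto simp: inj_on_def J_def nth_eq_iff_index_eq)
  ultimately have card_succ: "card (successors xs N) = card J" by (simp add: card_image)
  have "N \<subseteq> (!) xs ` insert (length xs - 1) J"
  proof
    fix x assume "x \<in> N"
    then obtain i where i: "i < length xs" "x = xs ! i" using assms(2) by (metis in_set_conv_nth subsetD)
    show "x \<in> (!) xs ` insert (length xs - 1) J"
    proof (cases "Suc i < length xs")
      case True
      then show ?thesis using i \<open>x \<in> N\<close> by (auto simp: J_def)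
    next
      case False
      then have "i = length xs - 1" using i(1) by simp
      then show ?thesis using i(2) by blast
    qed
  qed
  then have "card N \<le> card ((!) xs ` insert (length xs - 1) J)"
    using \<open>finite J\<close> by (intro card_mono) auto
  also have "\<dots> \<le> card (insert (length xs - 1) J)" using \<open>finite J\<close> by (rule card_image_le[OF finite_insert[THEN iffD2]])
  also have "\<dots> \<le> Suc (card J)" using \<open>finite J\<close> by (simp add: card_insert_if)
  finally show ?thesis using card_succ by simp
qed

locale longest_path =
  fixes V :: "'a set" and E :: "'a \<Rightarrow> 'a \<Rightarrow> bool" and a b :: 'a and P :: "'a list"
  assumes graph: "simple_graph V E"
    and path: "path_in V E a b P"
    and longest: "\<forall>Q. path_in V E a b Q \<longrightarrow> length Q \<le> length P"
begin

lemma sym: "\<forall>x y. E x y \<longrightarrow> E y x"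
  using graph by (simp add: simple_graph_def)

lemma no_longer_path:
  assumes "is_path E R" "set R \<subseteq> V" "hd R = a" "last R = b"
  shows "length R \<le> length P"
  using assms longest by (simp add: path_in_def)

context
  fixes C assumes C: "C \<subseteq> V - set P" "connected_on C E"
begin

lemma attachments_not_consecutive:
  assumes "Suc i < length P" "P ! i \<in> attachments (set P) E C"
  shows "P ! Suc i \<notin> attachments (set P) E C"
proof
  assume "P ! Suc i \<in> attachments (set P) E C"
  with assms(2) obtain h1 h2 where h: "h1 \<in> C" "h2 \<in> C" "E (P ! i) h1" "E (P ! Suc i) h2"
    by (auto simp: attachments_def)
  then obtain Q where Q: "path_in C E h1 h2 Q" using C(2) by (auto simp: connected_on_def)
  let ?R = "take (Suc i) P @ Q @ drop (Suc i) P"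
  have "is_path E ?R"
  proof (rule is_path_splice)
    show "is_path E (take (Suc i) P @ drop (Suc i) P)" using path by (simp add: path_in_def)
    show "set Q \<inter> set (take (Suc i) P @ drop (Suc i) P) = {}" using Q C(1) by (auto simp: path_in_def)
  qed (use Q h sym assms(1) in \<open>auto simp: path_in_def take_Suc_conv_app_nth hd_drop_conv_nth\<close>)
  moreover have "set ?R \<subseteq> V" "hd ?R = a" "last ?R = b"
    using path Q C(1) assms(1) by (auto simp: path_in_def hd_append dest: in_set_takeD in_set_dropD)
  ultimately have "length ?R \<le> length P" by (rule no_longer_path)
  then show False using Q assms(1) by (simp add: path_in_def is_path_def)
qed

lemma attachment_successors_nonadjacent:
  assumes "i < j" "Suc j < length P"
    and "P ! i \<in> attachments (set P) E C" "P ! j \<in> attachments (set P) E C"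
  shows "\<not> E (P ! Suc i) (P ! Suc j)"
proof
  assume "E (P ! Suc i) (P ! Suc j)"
  from assms(3,4) obtain h1 h2 where h: "h1 \<in> C" "h2 \<in> C" "E (P ! i) h1" "E (P ! j) h2"
    by (auto simp: attachments_def)
  then obtain Q where Q: "path_in C E h1 h2 Q" using C(2) by (auto simp: connected_on_def)
  define M where "M = drop (Suc i) (take (Suc j) P)"
  have "take (Suc i) (take (Suc j) P) = take (Suc i) P" using assms(1) by simp
  then have split: "P = take (Suc i) P @ M @ drop (Suc j) P"
    unfolding M_def by (metis append.assoc append_take_drop_id)
  have M: "M \<noteq> []" "hd M = P ! Suc i" "last M = P ! j"
    using assms(1,2) by (auto simp: M_def hd_drop_conv_nth last_conv_nth)
  let ?R = "take (Suc i) P @ Q @ rev M @ drop (Suc j) P"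
  have "is_path E ?R"
  proof (rule is_path_splice_rev[OF sym])
    show "is_path E (take (Suc i) P @ M @ drop (Suc j) P)" using path split by (simp add: path_in_def)
    show "set Q \<inter> set (take (Suc i) P @ M @ drop (Suc j) P) = {}"
      using Q C(1) split by (auto simp: path_in_def)
  qed (use Q h M sym assms(1,2) \<open>E (P ! Suc i) (P ! Suc j)\<close> in
      \<open>auto simp: path_in_def take_Suc_conv_app_nth hd_drop_conv_nth\<close>)
  moreover have "set ?R \<subseteq> V"
    using path Q C(1) arg_cong[OF split, of set] by (auto simp: path_in_def)
  moreover have "hd ?R = a" "last ?R = b" using path assms(1,2) by (auto simp: path_in_def hd_append)
  ultimately have "length ?R \<le> length P" by (rule no_longer_path)
  moreover have "length ?R = length P + length Q" using arg_cong[OF split, of length] by simp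
  ultimately have "length Q = 0" by linarith
  then show False using Q by (simp add: path_in_def is_path_def)
qed

lemma successors_attachments_independent:
  assumes "x \<in> successors P (attachments (set P) E C)" "y \<in> successors P (attachments (set P) E C)"
  shows "\<not> E x y"
proof -
  obtain i j where ij: "x = P ! Suc i" "y = P ! Suc j" "Suc i < length P" "Suc j < length P"
    "P ! i \<in> attachments (set P) E C" "P ! j \<in> attachments (set P) E C"
    using assms by (auto simp: successors_def)
  show ?thesis
  proof (cases i j rule: linorder_cases)
    case less then show ?thesis using attachment_successors_nonadjacent ij by blast
  next
    case equal then show ?thesis using graph ij by (simp add: simple_graph_def)
  next
    case greater then show ?thesis using attachment_successors_nonadjacent[of j i] ij sym by blast
  qed
qed

lemma successors_attachments_not_adjacent:
  assumes "x \<in> successors P (attachments (set P) E C)" "h \<in> C"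
  shows "\<not> E h x"
proof
  assume "E h x"
  obtain i where "x = P ! Suc i" "Suc i < length P" "P ! i \<in> attachments (set P) E C"
    using assms(1) by (auto simp: successors_def)
  moreover have "x \<in> attachments (set P) E C"
    using \<open>E h x\<close> assms(2) calculation(1,2) sym by (auto simp: attachments_def)
  ultimately show False using attachments_not_consecutive by blast
qed

lemma exists_unattached_vertex:
  assumes "a \<noteq> b"
  obtains x where "x \<in> set P" "x \<notin> attachments (set P) E C"
proof -
  have "Suc 0 < length P" using path assms by (cases P) (auto simp: path_in_def is_path_def)
  then show ?thesis using attachments_not_consecutive[of 0] that by (meson Suc_lessD nth_mem)
qed

end

lemma k_le_card_successors_attachments:
  assumes "k_connected (k + 1) V E" "component_of (V - set P) E C" "a \<noteq> b"
  shows "k \<le> card (successors P (attachments (set P) E C))"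
proof -
  let ?N = "attachments (set P) E C"
  have C: "C \<subseteq> V - set P" "connected_on C E" using assms(2) by (auto simp: component_of_def)
  obtain x where "x \<in> set P" "x \<notin> ?N" using exists_unattached_vertex[OF C assms(3)] .
  then have "k + 1 \<le> card ?N"
    using k_connected_le_card_attachments[OF sym assms(1) _ assms(2)] path by (auto simp: path_in_def)
  moreover have "card ?N \<le> Suc (card (successors P ?N))"
    using path by (intro card_le_Suc_card_successors) (auto simp: path_in_def is_path_def attachments_def)
  ultimately show ?thesis by simp
qed

end

theorem mainTheorem9:
  fixes V :: "'a set" and E :: "'a \<Rightarrow> 'a \<Rightarrow> bool" and k :: nat and a b :: 'a and P :: "'a list"
  assumes "k \<ge> 2"
    and "simple_graph V E"
    and "k_connected (k + 1) V E"
    and "\<not> has_induced_K2_kK1 k V E"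
    and "a \<in> V" and "b \<in> V" and "a \<noteq> b"
    and "path_in V E a b P"
    and "\<forall>Q. path_in V E a b Q \<longrightarrow> length Q \<le> length P"
  shows "\<forall>C. component_of (V - set P) E C \<longrightarrow> card C = 1"
proof (intro allI impI)
  fix C assume comp: "component_of (V - set P) E C"
  interpret longest_path V E a b P using assms(2,8,9) by unfold_locales
  have C: "C \<subseteq> V - set P" "connected_on C E" using comp by (auto simp: component_of_def)
  let ?I = "successors P (attachments (set P) E C)"
  show "card C = 1"
  proof (rule ccontr)
    assume "card C \<noteq> 1"
    moreover obtain u0 where "u0 \<in> C" using comp by (auto simp: component_of_def)
    ultimately have "C \<noteq> {u0}" by auto
    then obtain v0 where "v0 \<in> C" "v0 \<noteq> u0" using \<open>u0 \<in> C\<close> by blast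
    then obtain u v where uv: "u \<in> C" "v \<in> C" "E u v" using connected_on_edge[OF C(2) \<open>u0 \<in> C\<close>] by blast
    obtain I where I: "I \<subseteq> ?I" "card I = k"
      using k_le_card_successors_attachments[OF assms(3) comp assms(7)] by (rule obtain_subset_with_card_n)
    then have "I \<subseteq> set P" by (auto simp: successors_def)
    have "has_induced_K2_kK1 k V E"
      unfolding has_induced_K2_kK1_def
    proof (intro exI conjI)
      show "u \<in> V" "v \<in> V" "u \<notin> I" "v \<notin> I" "I \<subseteq> V"
        using uv C \<open>I \<subseteq> set P\<close> path by (auto simp: path_in_def)
      show "\<forall>x\<in>I. \<forall>y\<in>I. \<not> E x y"
        using I(1) successors_attachments_independent[OF C] by blast
      show "\<forall>x\<in>I. \<not> E u x \<and> \<not> E v x"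
        using I(1) uv successors_attachments_not_adjacent[OF C] by blast
    qed (use uv I in auto)
    then show False using assms(4) by blast
  qed
qed

end
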